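(* Consider $n$ agents with private types $t_i\in[0,\infty)$ whose valuations are $v_i(t_i,S)=t_i\cdot|S|$ for every winning set $S\subseteq[n]$ (including sets with $i\notin S$). Then for every fixed $k\ge1$ there is no universally truthful mechanism that is competitive with respect to $\mathcal{F}^{(k)}$: for every constant $L\ge1$ there exists $n\ge k$ such that no universally truthful mechanism on $n$ such agents has expected revenue at least $\mathcal{F}^{(k)}(t)/L$ for all $t\in[0,\infty)^n$, where $\mathcal{F}^{(k)}(t)=\max\{c|S| : c\ge0,\ S\subseteq[n],\ |S|\ge k,\ v_i(t_i,S)\ge c\ \forall i\in S\}$.
   Context: A deterministic mechanism maps reported types to a winning set $S$ and prices $p_i$ charged only to $i\in S$; agent $i$'s utility is $v_i(t_i,S)-p_i$ if $i\in S$ and $v_i(t_i,S)$ if $i\notin S$; revenue is $\sum_{i\in S}p_i$. It is truthful if reporting the true type maximizes every agent's utility for all fixed reports of the others, and individually rational if each winner's payment does not exceed its value $v_i(t_i,S)$ under truthful reporting. A universally truthful mechanism is a probability distribution over deterministic truthful, individually rational mechanisms. *)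

theory Defs
  imports "HOL-Probability.Probability"
begin

text \<open>Agents are 0,...,n-1. A type profile is a function nat => real; a valid
  profile for n agents has nonnegative entries at agents i < n and is 0 elsewhere.\<close>

type_synonym profile = "nat \<Rightarrow> real"
type_synonym outcome = "nat set \<times> (nat \<Rightarrow> real)"
type_synonym mechanism = "profile \<Rightarrow> outcome"

definition valid_profile :: "nat \<Rightarrow> profile \<Rightarrow> bool" where
  "valid_profile n t \<longleftrightarrow> (\<forall>i<n. 0 \<le> t i) \<and> (\<forall>i\<ge>n. t i = 0)"

definition val :: "real \<Rightarrow> nat set \<Rightarrow> real" where
  "val ti S = ti * real (card S)"

definition utility :: "nat \<Rightarrow> real \<Rightarrow> outcome \<Rightarrow> real" where
  "utility i ti oc = (if i \<in> fst oc then val ti (fst oc) - snd oc i else val ti (fst oc))"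

definition revenue :: "outcome \<Rightarrow> real" where
  "revenue oc = (\<Sum>i\<in>fst oc. snd oc i)"

definition det_mechanism :: "nat \<Rightarrow> mechanism \<Rightarrow> bool" where
  "det_mechanism n m \<longleftrightarrow> (\<forall>t. valid_profile n t \<longrightarrow> fst (m t) \<subseteq> {..<n})"

definition truthful :: "nat \<Rightarrow> mechanism \<Rightarrow> bool" where
  "truthful n m \<longleftrightarrow> (\<forall>t i x. valid_profile n t \<longrightarrow> i < n \<longrightarrow> 0 \<le> x \<longrightarrow>
      utility i (t i) (m (t(i := x))) \<le> utility i (t i) (m t))"

definition indiv_rational :: "nat \<Rightarrow> mechanism \<Rightarrow> bool" where
  "indiv_rational n m \<longleftrightarrow> (\<forall>t i. valid_profile n t \<longrightarrow> i \<in> fst (m t) \<longrightarrow>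
      snd (m t) i \<le> val (t i) (fst (m t)))"

text \<open>A universally truthful mechanism: a probability measure on deterministic
  truthful IR mechanisms (revenue at each valid profile measurable).\<close>
definition univ_truthful :: "nat \<Rightarrow> mechanism measure \<Rightarrow> bool" where
  "univ_truthful n D \<longleftrightarrow> prob_space D \<and>
     (\<forall>m\<in>space D. det_mechanism n m \<and> truthful n m \<and> indiv_rational n m) \<and>
     (\<forall>t. valid_profile n t \<longrightarrow> (\<lambda>m. revenue (m t)) \<in> borel_measurable D)"

definition Fk :: "nat \<Rightarrow> nat \<Rightarrow> profile \<Rightarrow> real" where
  "Fk n k t = Sup {c * real (card S) | c S. 0 \<le> c \<and> S \<subseteq> {..<n} \<and> k \<le> card S \<and>
                    (\<forall>i\<in>S. c \<le> val (t i) S)}"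

end

theory Submission
  imports Defs
begin

text \<open>Against a truthful deterministic mechanism, the number of winners is monotone in every
  report, and lowering one agent's report along the types 0, 1, 2, 4, ... bounds its payment
  Myerson-style. At the uniform profile in which every one of the n agents has type 2^J this gives
  payments at most \<open>\<Sum>j\<le>J+1. 2^(j-1) (g j - g (j-1))\<close>, where g j counts the winners at the
  uniform profile of type 2^(j-1). Dividing by 2^J and summing over J = 0..M, every increment of
  g is counted with total weight at most 2, so the normalised revenues sum to at most 2n^2 for
  every M. A mechanism with expected revenue at least F^(n)/L would make each normalised term at
  least n^2/L, which is impossible once M \<ge> 2L.\<close>

definition payment :: "nat \<Rightarrow> outcome \<Rightarrow> real" where
  "payment i oc = (if i \<in> fst oc then snd oc i else 0)"

definition num_winners :: "mechanism \<Rightarrow> profile \<Rightarrow> real" where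
  "num_winners m t = real (card (fst (m t)))"

definition uniform_profile :: "nat \<Rightarrow> real \<Rightarrow> profile" where
  "uniform_profile n x = (\<lambda>i. if i < n then x else 0)"

definition dyadic_type :: "nat \<Rightarrow> real" where
  "dyadic_type l = (if l = 0 then 0 else 2 ^ (l - 1))"

definition myerson_sum :: "(nat \<Rightarrow> real) \<Rightarrow> nat \<Rightarrow> real" where
  "myerson_sum g l = (\<Sum>j\<in>{1..l}. dyadic_type j * (g j - g (j - 1)))"

lemma utility_eq_payment: "utility i ti oc = ti * real (card (fst oc)) - payment i oc"
  by (simp add: utility_def payment_def val_def)

lemma valid_profile_upd:
  "valid_profile n t \<Longrightarrow> i < n \<Longrightarrow> 0 \<le> x \<Longrightarrow> valid_profile n (t(i := x))"
  by (auto simp: valid_profile_def)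

lemma valid_uniform_profile: "0 \<le> x \<Longrightarrow> valid_profile n (uniform_profile n x)"
  by (auto simp: valid_profile_def uniform_profile_def)

lemma truthful_payment_le:
  assumes "truthful n m" "valid_profile n t" "i < n" "0 \<le> x"
  shows "payment i (m t) \<le> payment i (m (t(i := x))) + t i * (num_winners m t - num_winners m (t(i := x)))"
proof -
  have "utility i (t i) (m (t(i := x))) \<le> utility i (t i) (m t)"
    using assms unfolding truthful_def by blast
  then show ?thesis by (simp add: utility_eq_payment num_winners_def right_diff_distrib)
qed

lemma truthful_num_winners_mono_upd:
  assumes tr: "truthful n m" and "valid_profile n t" and i: "i < n"
    and "0 \<le> x" "x \<le> y"
  shows "num_winners m (t(i := x)) \<le> num_winners m (t(i := y))"
proof (cases "x = y")
  case False
  have tx: "valid_profile n (t(i := x))" and ty: "valid_profile n (t(i := y))"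
    using assms by (auto intro: valid_profile_upd)
  have "payment i (m (t(i := x))) \<le> payment i (m (t(i := y))) + x * (num_winners m (t(i := x)) - num_winners m (t(i := y)))"
       "payment i (m (t(i := y))) \<le> payment i (m (t(i := x))) + y * (num_winners m (t(i := y)) - num_winners m (t(i := x)))"
    using truthful_payment_le[OF tr tx i, of y] truthful_payment_le[OF tr ty i, of x] assms by simp_all
  then have "(y - x) * num_winners m (t(i := x)) \<le> (y - x) * num_winners m (t(i := y))"
    by (simp add: algebra_simps)
  then show ?thesis using \<open>x \<le> y\<close> False by simp
qed simp

lemma truthful_num_winners_mono:
  assumes tr: "truthful n m" and r: "valid_profile n r" and r': "valid_profile n r'"
    and le: "\<And>i. r i \<le> r' i"
  shows "num_winners m r \<le> num_winners m r'"
proof -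
  define hybrid where "hybrid j = (\<lambda>i. if i < j then r' i else r i)" for j
  have "num_winners m r \<le> num_winners m (hybrid j)" if "j \<le> n" for j
    using that
  proof (induction j)
    case 0
    then show ?case by (simp add: hybrid_def)
  next
    case (Suc j)
    have "valid_profile n (hybrid j)"
      using r r' Suc.prems unfolding valid_profile_def hybrid_def by auto
    moreover have "hybrid j = (hybrid j)(j := r j)" "hybrid (Suc j) = (hybrid j)(j := r' j)"
      by (auto simp: hybrid_def fun_eq_iff)
    ultimately have "num_winners m (hybrid j) \<le> num_winners m (hybrid (Suc j))"
      using truthful_num_winners_mono_upd[OF tr, of "hybrid j" j "r j" "r' j"] r le Suc.prems
      unfolding valid_profile_def by (metis Suc_le_lessD)
    with Suc show ?case by simp
  qed
  moreover have "hybrid n = r'"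
    using r r' unfolding hybrid_def valid_profile_def by (auto simp: fun_eq_iff)
  ultimately show ?thesis by auto
qed

lemma indiv_rational_payment_nonpos:
  assumes "indiv_rational n m" "valid_profile n t" "t i = 0"
  shows "payment i (m t) \<le> 0"
proof -
  have "i \<in> fst (m t) \<Longrightarrow> snd (m t) i \<le> val (t i) (fst (m t))"
    using assms unfolding indiv_rational_def by blast
  then show ?thesis by (simp add: payment_def val_def assms(3))
qed

lemma revenue_eq_sum_payment:
  assumes "det_mechanism n m" "valid_profile n t"
  shows "revenue (m t) = (\<Sum>i<n. payment i (m t))"
proof -
  have "fst (m t) \<subseteq> {..<n}" using assms unfolding det_mechanism_def by auto
  then have "fst (m t) = {..<n} \<inter> fst (m t)" by auto
  then show ?thesis
    unfolding revenue_def payment_def by (metis (no_types) sum.inter_restrict finite_lessThan)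
qed

lemma num_winners_le:
  assumes "det_mechanism n m" "valid_profile n t"
  shows "num_winners m t \<le> real n"
proof -
  have "fst (m t) \<subseteq> {..<n}" using assms unfolding det_mechanism_def by auto
  then have "card (fst (m t)) \<le> n" using card_mono[of "{..<n}"] by fastforce
  then show ?thesis unfolding num_winners_def by simp
qed

lemma dyadic_type_nonneg: "0 \<le> dyadic_type l"
  by (simp add: dyadic_type_def)

lemma dyadic_type_Suc: "dyadic_type (Suc l) = 2 ^ l"
  by (simp add: dyadic_type_def)

lemma dyadic_type_mono: "l \<le> l' \<Longrightarrow> dyadic_type l \<le> dyadic_type l'"
  by (auto simp: dyadic_type_def)

lemma myerson_sum_Suc:
  "myerson_sum g (Suc l) = myerson_sum g l + dyadic_type (Suc l) * (g (Suc l) - g l)"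
  by (simp add: myerson_sum_def)

lemma myerson_sum_nonneg:
  assumes "\<And>j. g j \<le> (g (Suc j) :: real)"
  shows "0 \<le> myerson_sum g l"
  by (induction l) (auto simp: myerson_sum_Suc myerson_sum_def intro!: add_nonneg_nonneg
      mult_nonneg_nonneg dyadic_type_nonneg assms[simplified le_diff_eq[symmetric]])

text \<open>Agent i's report is lowered from \<open>dyadic_type l\<close> to \<open>dyadic_type (l - 1)\<close> while the others
  keep type y; monotonicity then replaces the winner count at that profile by the one at the uniform
  profile of type \<open>dyadic_type l\<close>, which is what makes the bound telescope.\<close>
lemma truthful_payment_le_myerson_sum_upd:
  assumes tr: "truthful n m" and ir: "indiv_rational n m" and i: "i < n"
    and l: "dyadic_type l \<le> y"
  defines "g \<equiv> \<lambda>j. num_winners m (uniform_profile n (dyadic_type j))"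
  shows "payment i (m ((uniform_profile n y)(i := dyadic_type l))) \<le> myerson_sum g l
    + dyadic_type l * (num_winners m ((uniform_profile n y)(i := dyadic_type l)) - g l)"
  using l
proof (induction l)
  case 0
  have zero: "dyadic_type 0 = 0" by (simp add: dyadic_type_def)
  have "valid_profile n ((uniform_profile n y)(i := 0))"
    using 0 i by (intro valid_profile_upd valid_uniform_profile) (simp_all add: zero)
  then have "payment i (m ((uniform_profile n y)(i := 0))) \<le> 0"
    by (rule indiv_rational_payment_nonpos[OF ir]) simp
  moreover have "myerson_sum g 0 = 0" by (simp add: myerson_sum_def)
  ultimately show ?case by (simp only: zero mult_zero_left add_0_right)
next
  case (Suc l)
  define u where "u = uniform_profile n y"
  define t where "t x = u(i := x)" for x
  have y: "0 \<le> y" using Suc.prems dyadic_type_nonneg order_trans by blast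
  have vt: "valid_profile n (t x)" if "0 \<le> x" for x
    unfolding t_def u_def using valid_uniform_profile[OF y] i that by (rule valid_profile_upd)
  have step: "payment i (m (t (dyadic_type (Suc l)))) \<le> payment i (m (t (dyadic_type l)))
      + dyadic_type (Suc l) * (num_winners m (t (dyadic_type (Suc l))) - num_winners m (t (dyadic_type l)))"
    using truthful_payment_le[OF tr vt[OF dyadic_type_nonneg] i dyadic_type_nonneg[of l]]
    by (simp add: t_def)
  have IH: "payment i (m (t (dyadic_type l))) \<le> myerson_sum g l
      + dyadic_type l * (num_winners m (t (dyadic_type l)) - g l)"
    using Suc dyadic_type_mono[of l "Suc l"] unfolding t_def u_def by (simp add: fun_upd_def)
  have "g l \<le> num_winners m (t (dyadic_type l))"
    unfolding g_def
  proof (rule truthful_num_winners_mono[OF tr valid_uniform_profile[OF dyadic_type_nonneg] vt[OF dyadic_type_nonneg]])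
    fix j
    show "uniform_profile n (dyadic_type l) j \<le> t (dyadic_type l) j"
      using Suc.prems dyadic_type_mono[of l "Suc l"] dyadic_type_nonneg[of l]
      by (auto simp: t_def u_def uniform_profile_def)
  qed
  then have "dyadic_type l * (num_winners m (t (dyadic_type l)) - g l)
      \<le> dyadic_type (Suc l) * (num_winners m (t (dyadic_type l)) - g l)"
    by (intro mult_right_mono dyadic_type_mono) auto
  with step IH have "payment i (m (t (dyadic_type (Suc l)))) \<le> myerson_sum g (Suc l)
      + dyadic_type (Suc l) * (num_winners m (t (dyadic_type (Suc l))) - g (Suc l))"
    by (simp add: myerson_sum_Suc algebra_simps)
  then show ?case by (simp add: t_def u_def fun_upd_def)
qed

corollary truthful_payment_le_myerson_sum:
  assumes "truthful n m" "indiv_rational n m" "i < n"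
  shows "payment i (m (uniform_profile n (dyadic_type l)))
    \<le> myerson_sum (\<lambda>j. num_winners m (uniform_profile n (dyadic_type j))) l"
proof -
  have "(uniform_profile n (dyadic_type l))(i := dyadic_type l) = uniform_profile n (dyadic_type l)"
    using assms(3) by (auto simp: uniform_profile_def)
  then show ?thesis
    using truthful_payment_le_myerson_sum_upd[OF assms, where l = l and y = "dyadic_type l"] by simp
qed

text \<open>The weight of the increment \<open>g j - g (j - 1)\<close> on the left is \<open>\<Sum>J\<in>{j-1..M}. 2^(j-1) / 2^J < 2\<close>;
  the extra second summand is exactly the slack that makes the induction go through.\<close>
lemma scaled_myerson_sum_le:
  assumes "\<And>j. g j \<le> (g (Suc j) :: real)"
  shows "(\<Sum>J\<le>M. myerson_sum g (Suc J) / 2 ^ J) + myerson_sum g (Suc M) / 2 ^ M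
    \<le> 2 * (g (Suc M) - g 0)"
proof (induction M)
  case 0
  then show ?case by (simp add: myerson_sum_def dyadic_type_def)
next
  case (Suc M)
  have "myerson_sum g (Suc (Suc M)) / 2 ^ Suc M
      = myerson_sum g (Suc M) / 2 ^ Suc M + (g (Suc (Suc M)) - g (Suc M))"
    by (simp add: myerson_sum_Suc dyadic_type_Suc add_divide_distrib)
  then show ?case using Suc.IH by (simp add: field_simps)
qed

lemma truthful_scaled_revenue_sum_le:
  assumes dm: "det_mechanism n m" and tr: "truthful n m" and ir: "indiv_rational n m"
  shows "(\<Sum>J\<le>M. revenue (m (uniform_profile n (2 ^ J))) / 2 ^ J) \<le> 2 * real n * real n"
proof -
  define g where "g = (\<lambda>j. num_winners m (uniform_profile n (dyadic_type j)))"
  have g_mono: "g j \<le> g (Suc j)" for j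
    unfolding g_def using dyadic_type_mono[of j "Suc j"]
    by (intro truthful_num_winners_mono[OF tr] valid_uniform_profile dyadic_type_nonneg)
       (auto simp: uniform_profile_def)
  have "revenue (m (uniform_profile n (2 ^ J))) \<le> real n * myerson_sum g (Suc J)" for J
  proof -
    have "revenue (m (uniform_profile n (2 ^ J))) = (\<Sum>i<n. payment i (m (uniform_profile n (2 ^ J))))"
      by (rule revenue_eq_sum_payment[OF dm valid_uniform_profile]) simp
    also have "\<dots> \<le> real (card {..<n}) * myerson_sum g (Suc J)"
      using truthful_payment_le_myerson_sum[OF tr ir, of _ "Suc J"]
      by (intro sum_bounded_above) (simp add: g_def dyadic_type_Suc)
    finally show ?thesis by simp
  qed
  then have "(\<Sum>J\<le>M. revenue (m (uniform_profile n (2 ^ J))) / 2 ^ J)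
      \<le> (\<Sum>J\<le>M. real n * (myerson_sum g (Suc J) / 2 ^ J))"
    by (intro sum_mono) (simp add: divide_right_mono)
  also have "\<dots> = real n * (\<Sum>J\<le>M. myerson_sum g (Suc J) / 2 ^ J)"
    by (simp add: sum_distrib_left)
  also have "\<dots> \<le> real n * (2 * real n)"
  proof (intro mult_left_mono)
    have "0 \<le> myerson_sum g (Suc M) / 2 ^ M" "0 \<le> g 0" "g (Suc M) \<le> real n"
      using myerson_sum_nonneg[of g, OF g_mono]
        num_winners_le[OF dm valid_uniform_profile[OF dyadic_type_nonneg]]
      by (auto simp: g_def num_winners_def)
    then show "(\<Sum>J\<le>M. myerson_sum g (Suc J) / 2 ^ J) \<le> 2 * real n"
      using scaled_myerson_sum_le[of g M, OF g_mono] by (smt (verit))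
  qed simp
  finally show ?thesis by simp
qed

lemma Fk_uniform_profile_ge:
  assumes n: "1 \<le> n" and x: "0 \<le> x"
  shows "real n * x * real n \<le> Fk n n (uniform_profile n x)"
  unfolding Fk_def
proof (rule cSup_upper)
  show "real n * x * real n \<in> {c * real (card S) | c S. 0 \<le> c \<and> S \<subseteq> {..<n} \<and> n \<le> card S
      \<and> (\<forall>i\<in>S. c \<le> val (uniform_profile n x i) S)}"
    using x by (intro CollectI exI[of _ "real n * x"] exI[of _ "{..<n}"])
      (auto simp: val_def uniform_profile_def)
  show "bdd_above {c * real (card S) | c S. 0 \<le> c \<and> S \<subseteq> {..<n} \<and> n \<le> card S
      \<and> (\<forall>i\<in>S. c \<le> val (uniform_profile n x i) S)}"
  proof (rule bdd_aboveI, safe)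
    fix c S assume "0 \<le> c" and S: "S \<subseteq> {..<n}" and nS: "n \<le> card S"
      and v: "\<forall>i\<in>S. c \<le> val (uniform_profile n x i) S"
    have "card S = n" using S nS card_mono[of "{..<n}" S] by fastforce
    then obtain i where "i \<in> S" using n by fastforce
    moreover have "i < n" using S \<open>i \<in> S\<close> by auto
    ultimately have "c \<le> x * real n" using v \<open>card S = n\<close> by (auto simp: val_def uniform_profile_def)
    then show "c * real (card S) \<le> real n * x * real n"
      using mult_right_mono[OF \<open>c \<le> x * real n\<close>, of "real n"] \<open>card S = n\<close>
      by (simp add: mult.commute)
  qed
qed

lemma no_competitive_univ_truthful:
  assumes n: "1 \<le> n" and L: "1 \<le> L"
    and D: "univ_truthful n D"
    and competitive: "\<And>t. valid_profile n t \<Longrightarrow> integrable D (\<lambda>m. revenue (m t))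
        \<and> Fk n n t / L \<le> (\<integral>m. revenue (m t) \<partial>D)"
  shows False
proof -
  interpret prob_space D using D unfolding univ_truthful_def by blast
  define M where "M = nat \<lceil>2 * L\<rceil>"
  define R where "R J m = revenue (m (uniform_profile n (2 ^ J))) / 2 ^ J" for J :: nat and m :: mechanism
  have int_R: "integrable D (R J)" for J
    unfolding R_def using competitive[OF valid_uniform_profile[of "2 ^ J"]] by simp
  have "real n * real n / L \<le> (\<integral>m. R J m \<partial>D)" for J
  proof -
    have "real n * 2 ^ J * real n / L \<le> (\<integral>m. revenue (m (uniform_profile n (2 ^ J))) \<partial>D)"
      using Fk_uniform_profile_ge[OF n, of "2 ^ J"] competitive[OF valid_uniform_profile[of "2 ^ J"]] L
      by (smt (verit) divide_right_mono zero_le_power)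
    then show ?thesis unfolding R_def by (simp add: field_simps)
  qed
  then have "(\<Sum>J\<le>M. real n * real n / L) \<le> (\<Sum>J\<le>M. \<integral>m. R J m \<partial>D)"
    by (intro sum_mono)
  also have "\<dots> = (\<integral>m. (\<Sum>J\<le>M. R J m) \<partial>D)"
    using int_R by (simp add: Bochner_Integration.integral_sum)
  also have "\<dots> \<le> (\<integral>m. 2 * real n * real n \<partial>D)"
    using D int_R truthful_scaled_revenue_sum_le unfolding R_def univ_truthful_def
    by (intro integral_mono) auto
  also have "\<dots> = 2 * real n * real n" by (simp add: prob_space)
  finally have "real (Suc M) * (real n * real n) \<le> 2 * L * (real n * real n)"
    using L by (simp add: field_simps)
  then have "real (Suc M) \<le> 2 * L" using n by (simp add: mult_le_cancel_right)
  then show False unfolding M_def by linarith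
qed

theorem claim3:
  fixes k :: nat
  assumes "1 \<le> k"
  shows "\<forall>L::real. 1 \<le> L \<longrightarrow> (\<exists>n\<ge>k. \<not> (\<exists>D. univ_truthful n D \<and>
           (\<forall>t. valid_profile n t \<longrightarrow>
               integrable D (\<lambda>m. revenue (m t)) \<and>
               Fk n k t / L \<le> (\<integral>m. revenue (m t) \<partial>D))))"
  using no_competitive_univ_truthful[OF assms] by blast

end
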